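(* Let $\mathcal P$ be a CPOS $2n$-gon. The following are equivalent: (i) all vertices $D(i+\tfrac12)$, $1\le i\le n$, of the central symmetry set of $\mathcal P$ coincide (the central symmetry set reduces to a point); (ii) all vertices $M_i$, $1\le i\le n$, of the area evolute of $\mathcal P$ coincide (the area evolute reduces to a point); (iii) $\mathcal P$ is symmetric with respect to some point $O$, i.e. $P_{i+n}-O=O-P_i$ for all $1\le i\le n$.
   Context: A CPOS (convex, parallel opposite sides) $2n$-gon ($n\ge2$) is a closed planar polygon $\mathcal P$ with vertices $P_1,\dots,P_{2n}$ (indices taken modulo $2n$) which bounds a convex region, has no two adjacent sides parallel, has parallel opposite sides ($P_{i+n+1}-P_{i+n}$ is parallel to $P_{i+1}-P_i$ for all $i$), and is positively oriented: $[P_{i+1}-P_i,P_{j+1}-P_j]>0$ for $1\le i<j\le n$, where $[a,b]$ is the determinant of $a,b\in\mathbb R^2$. The great diagonal $d_i$ is the line through $P_i$ and $P_{i+n}$, and $D(i+\tfrac12)$ is the intersection point of $d_i$ and $d_{i+1}$. The central symmetry set is the closed polygon with vertices $D(1+\tfrac12),\dots,D(n+\tfrac12)$. $M_i=\tfrac12(P_i+P_{i+n})$, and the area evolute is the closed polygon with vertices $M_1,\dots,M_n$. *)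

theory Defs
  imports "HOL-Analysis.Analysis"
begin

text \<open>Points of the plane are vectors in real^2. A 2n-gon is given by a function
  P :: nat => real^2 with P i the vertex P_i, extended periodically
  (P (i + 2n) = P i), so indices are taken modulo 2n.\<close>

definition det2 :: "real^2 \<Rightarrow> real^2 \<Rightarrow> real" where
  "det2 a b = a$1 * b$2 - a$2 * b$1"

definition parallel2 :: "real^2 \<Rightarrow> real^2 \<Rightarrow> bool" where
  "parallel2 a b \<longleftrightarrow> det2 a b = 0"

definition polygon_curve :: "nat \<Rightarrow> (nat \<Rightarrow> real^2) \<Rightarrow> (real^2) set" where
  "polygon_curve n P = (\<Union>i\<in>{1..2*n}. closed_segment (P i) (P (i+1)))"

definition CPOS :: "nat \<Rightarrow> (nat \<Rightarrow> real^2) \<Rightarrow> bool" where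
  "CPOS n P \<longleftrightarrow>
     n \<ge> 2
   \<and> (\<forall>i. P (i + 2*n) = P i)
   \<comment> \<open>bounds a convex region\<close>
   \<and> (\<exists>K. convex K \<and> compact K \<and> interior K \<noteq> {} \<and> frontier K = polygon_curve n P)
   \<comment> \<open>no two adjacent sides parallel\<close>
   \<and> (\<forall>i. \<not> parallel2 (P (i+1) - P i) (P (i+2) - P (i+1)))
   \<comment> \<open>parallel opposite sides\<close>
   \<and> (\<forall>i. parallel2 (P (i+n+1) - P (i+n)) (P (i+1) - P i))
   \<comment> \<open>positively oriented\<close>
   \<and> (\<forall>i j. 1 \<le> i \<longrightarrow> i < j \<longrightarrow> j \<le> n \<longrightarrow> det2 (P (i+1) - P i) (P (j+1) - P j) > 0)"

definition great_diag :: "nat \<Rightarrow> (nat \<Rightarrow> real^2) \<Rightarrow> nat \<Rightarrow> (real^2) set" where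
  "great_diag n P i = affine hull {P i, P (i+n)}"

text \<open>Dpt n P i is the point D(i + 1/2), the intersection of d_i and d_(i+1).\<close>
definition Dpt :: "nat \<Rightarrow> (nat \<Rightarrow> real^2) \<Rightarrow> nat \<Rightarrow> real^2" where
  "Dpt n P i = (THE x. x \<in> great_diag n P i \<and> x \<in> great_diag n P (i+1))"

definition Mpt :: "nat \<Rightarrow> (nat \<Rightarrow> real^2) \<Rightarrow> nat \<Rightarrow> real^2" where
  "Mpt n P i = (1/2) *\<^sub>R (P i + P (i+n))"

end

theory Submission
  imports Defs
begin

(* Write v_k = P_(k+1) - P_k for the sides and w_k = P_(k+n) - P_k for the
   great diagonals of a CPOS 2n-gon.  Every side lies on a supporting line of the convex
   region, so consecutive turns det(v_k, v_(k+1)) never have opposite signs; being nonzero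
   and positive for 1 <= k < n, they are all positive.  Consequently opposite sides are
   antiparallel (v_(k+n) = mu_k v_k with mu_k < 0), and consecutive great diagonals d_i,
   d_(i+1), 1 <= i <= n, are never parallel, so each D(i+1/2) is a genuine intersection.
   The equivalences then follow:
   (ii) <-> (iii) is algebra: M_i = O iff P_(i+n) - O = O - P_i.
   (ii) -> (i): the common midpoint lies on d_1, ..., d_n and on d_(n+1) = d_1, hence it is
   every D(i+1/2).
   (i) -> (ii): write the common point as D = P_i + s_i w_i.  By the intercept theorem for the
   parallel sides P_i P_(i+1) and P_(i+n) P_(i+n+1) all s_i agree, and since d_(n+1) is d_1
   traversed backwards, s_1 = 1 - s_1; thus D = M_i for every i. *)

definition edge_vec :: "(nat \<Rightarrow> real^2) \<Rightarrow> nat \<Rightarrow> real^2" where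
  "edge_vec P k = P (Suc k) - P k"

definition diag_vec :: "nat \<Rightarrow> (nat \<Rightarrow> real^2) \<Rightarrow> nat \<Rightarrow> real^2" where
  "diag_vec n P k = P (k + n) - P k"

lemma det2_scaleR_left: "det2 (c *\<^sub>R a) b = c * det2 a b"
  unfolding det2_def by (simp add: algebra_simps)

lemma det2_scaleR_right: "det2 a (c *\<^sub>R b) = c * det2 a b"
  unfolding det2_def by (simp add: algebra_simps)

lemma det2_add_right: "det2 a (b + c) = det2 a b + det2 a c"
  unfolding det2_def by (simp add: algebra_simps)

lemma det2_minus_right: "det2 a (- b) = - det2 a b"
  unfolding det2_def by simp

lemma det2_sum_left: "det2 (sum f A) b = (\<Sum>k\<in>A. det2 (f k) b)"
  unfolding det2_def by (simp add: sum_distrib_right sum_subtractf)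

lemma det2_self: "det2 a a = 0"
  unfolding det2_def by simp

lemma det2_swap: "det2 b a = - det2 a b"
  unfolding det2_def by simp

lemma det2_zero_left: "det2 0 b = 0"
  unfolding det2_def by simp

lemma vec2_eq_iff: "(x::real^2) = y \<longleftrightarrow> x$1 = y$1 \<and> x$2 = y$2"
  by (simp add: vec_eq_iff forall_2)

lemma det2_eq_0_imp_multiple:
  assumes "det2 a b = 0" "a \<noteq> 0"
  shows "\<exists>m. b = m *\<^sub>R a"
proof (cases "a$1 = 0")
  case True
  then have "a$2 \<noteq> 0" using assms(2) by (auto simp: vec2_eq_iff)
  with assms(1) True show ?thesis
    by (intro exI[of _ "b$2 / a$2"]) (auto simp: vec2_eq_iff det2_def field_simps)
next
  case False
  with assms(1) show ?thesis
    by (intro exI[of _ "b$1 / a$1"]) (auto simp: vec2_eq_iff det2_def field_simps)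
qed

(* Key identity: if a is orthogonal to v, then det(v,a) det(v,u) = |v|^2 (a . u).  Hence
   two vectors on the same side of the line spanned by v have determinants with v of
   equal (weak) sign. *)
lemma det2_same_halfplane:
  fixes a v u u' :: "real^2"
  assumes "a \<noteq> 0" "v \<noteq> 0" "a \<bullet> v = 0" "a \<bullet> u \<ge> 0" "a \<bullet> u' \<ge> 0"
  shows "det2 v u * det2 v u' \<ge> 0"
proof -
  have lagrange: "det2 v a * det2 v x = (v \<bullet> v) * (a \<bullet> x) - (v \<bullet> a) * (v \<bullet> x)" for x
    unfolding det2_def inner_vec_def by (simp add: sum_2) algebra
  have key: "det2 v a * det2 v x = (v \<bullet> v) * (a \<bullet> x)" for x
    using lagrange[of x] assms(3) by (simp add: inner_commute)
  have "(det2 v a)\<^sup>2 = (v \<bullet> v) * (a \<bullet> a)"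
    using key[of a] by (simp add: power2_eq_square)
  then have pos: "(det2 v a)\<^sup>2 > 0"
    using assms(1,2) by simp
  have "(det2 v a)\<^sup>2 * (det2 v u * det2 v u') = (v \<bullet> v)\<^sup>2 * ((a \<bullet> u) * (a \<bullet> u'))"
    using key[of u] key[of u'] by (simp add: power2_eq_square algebra_simps)
  also have "\<dots> \<ge> 0"
    using assms(4,5) by simp
  finally show ?thesis
    using pos by (simp add: zero_le_mult_iff)
qed

lemma in_affine_hull_2_iff: "x \<in> affine hull {a, b::real^2} \<longleftrightarrow> (\<exists>s. x = a + s *\<^sub>R (b - a))"
  by (auto simp: affine_hull_2_alt)

lemma unique_line_intersection:
  fixes A B C E :: "real^2"
  assumes "det2 (B - A) (E - C) \<noteq> 0"
  shows "\<exists>!x. x \<in> affine hull {A, B} \<and> x \<in> affine hull {C, E}"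
proof -
  define w u where "w = B - A" and "u = E - C"
  have d: "det2 w u \<noteq> 0"
    using assms by (simp add: w_def u_def)
  define s t where "s = det2 (C - A) u / det2 w u" and "t = - det2 w (C - A) / det2 w u"
  have meet: "A + s *\<^sub>R w = C + t *\<^sub>R u"
    using d unfolding s_def t_def by (simp add: vec2_eq_iff det2_def field_simps)
  show ?thesis
  proof
    show "A + s *\<^sub>R w \<in> affine hull {A, B} \<and> A + s *\<^sub>R w \<in> affine hull {C, E}"
      unfolding in_affine_hull_2_iff using meet unfolding w_def u_def by blast
  next
    fix y assume "y \<in> affine hull {A, B} \<and> y \<in> affine hull {C, E}"
    then obtain s' t' where y1: "y = A + s' *\<^sub>R w" and y2: "y = C + t' *\<^sub>R u"
      unfolding in_affine_hull_2_iff w_def u_def by blast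
    have "(A + s' *\<^sub>R w) - (A + s *\<^sub>R w) = (C + t' *\<^sub>R u) - (C + t *\<^sub>R u)"
      using y1 y2 meet by simp
    then have "(s' - s) *\<^sub>R w = (t' - t) *\<^sub>R u"
      by (simp add: scaleR_diff_left)
    then have "(t' - t) * det2 w u = 0"
      by (metis det2_scaleR_right det2_self mult_zero_right)
    then have "t' = t"
      using d by simp
    then show "y = A + s *\<^sub>R w"
      using y2 meet by simp
  qed
qed

lemma intercept_ratio:
  fixes A B a b D :: "real^2"
  assumes "det2 a b \<noteq> 0" "D = A + s *\<^sub>R a" "D = B + t *\<^sub>R b"
    and "det2 ((B + b) - (A + a)) (B - A) = 0"
  shows "s = t"
proof -
  have A: "A = D - s *\<^sub>R a"
    using assms(2) by simp
  have B: "B = D - t *\<^sub>R b"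
    using assms(3) by simp
  have "det2 ((B + b) - (A + a)) (B - A) = det2 a b * (t - s)"
    unfolding A B det2_def by (simp add: algebra_simps)
  then show ?thesis
    using assms(1,4) by simp
qed

lemma edge_in_polygon_curve:
  fixes P :: "nat \<Rightarrow> real^2"
  assumes per: "\<forall>i. P (i + 2*n) = P i" and "n \<ge> 1"
  shows "closed_segment (P j) (P (Suc j)) \<subseteq> polygon_curve n P"
proof (induction j rule: less_induct)
  case (less j)
  have listed: "closed_segment (P k) (P (Suc k)) \<subseteq> polygon_curve n P" if "k \<in> {1..2*n}" for k
    unfolding polygon_curve_def using that by auto
  consider "j = 0" | "j \<in> {1..2*n}" | "2*n < j"
    by (cases "j = 0"; cases "2*n < j") auto
  then show ?case
  proof cases
    case 1
    have "P 0 = P (2*n)" "P 1 = P (Suc (2*n))"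
      using per[rule_format, of 0] per[rule_format, of 1] by simp_all
    then show ?thesis
      using listed[of "2*n"] assms(2) 1 by simp
  next
    case 2
    then show ?thesis by (rule listed)
  next
    case 3
    have "P j = P (j - 2*n)" "P (Suc j) = P (Suc (j - 2*n))"
      using per[rule_format, of "j - 2*n"] per[rule_format, of "Suc (j - 2*n)"] 3 by simp_all
    then show ?thesis
      using less.IH[of "j - 2*n"] 3 assms(2) by simp
  qed
qed

lemma CPOS_edge_supporting_line:
  assumes "CPOS n P"
  obtains a where "a \<noteq> 0" "a \<bullet> edge_vec P e = 0" "\<And>k. a \<bullet> (P k - P e) \<ge> 0"
proof -
  from assms obtain K where n2: "n \<ge> 2" and per: "\<forall>i. P (i + 2*n) = P i"
    and K: "convex K" "compact K" "interior K \<noteq> {}" "frontier K = polygon_curve n P"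
    unfolding CPOS_def by blast
  have "closed K"
    using K(2) by (simp add: compact_imp_closed)
  have edge_frontier: "closed_segment (P i) (P (Suc i)) \<subseteq> frontier K" for i
    using edge_in_polygon_curve[OF per] n2 K(4) by simp
  have vertex_K: "P i \<in> K" for i
  proof -
    have "P i \<in> frontier K"
      using edge_frontier[of i] ends_in_segment(1) by blast
    then show ?thesis
      using frontier_subset_closed[OF \<open>closed K\<close>] by blast
  qed
  define m where "m = midpoint (P e) (P (Suc e))"
  have "m \<in> frontier K"
    using edge_frontier[of e] unfolding m_def by (auto simp: midpoint_in_closed_segment)
  then have "m \<in> closure K" "m \<notin> rel_interior K"
    using rel_interior_nonempty_interior[OF K(3)] by (auto simp: frontier_def)
  then obtain a where a0: "a \<noteq> 0" and supp: "\<And>y. y \<in> closure K \<Longrightarrow> a \<bullet> m \<le> a \<bullet> y"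
    using supporting_hyperplane_relative_frontier[OF K(1)] by metis
  have above: "a \<bullet> m \<le> a \<bullet> P i" for i
    using supp[of "P i"] vertex_K[of i] \<open>closed K\<close> by simp
  have "a \<bullet> m = (a \<bullet> P e + a \<bullet> P (Suc e)) / 2"
    unfolding m_def midpoint_def by (simp add: inner_add_right)
  then have "a \<bullet> P e = a \<bullet> m" "a \<bullet> P (Suc e) = a \<bullet> m"
    using above[of e] above[of "Suc e"] by (simp_all add: field_simps)
  then show ?thesis
    using that[OF a0] above by (simp add: edge_vec_def inner_diff_right)
qed

lemma CPOS_turn_nonzero:
  assumes "CPOS n P"
  shows "det2 (edge_vec P j) (edge_vec P (Suc j)) \<noteq> 0"
proof -
  have "\<not> parallel2 (P (j+1) - P j) (P (j+2) - P (j+1))"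
    using assms unfolding CPOS_def by blast
  then show ?thesis
    unfolding parallel2_def edge_vec_def by (simp add: numeral_2_eq_2)
qed

lemma CPOS_edge_nonzero:
  assumes "CPOS n P"
  shows "edge_vec P j \<noteq> 0"
  using CPOS_turn_nonzero[OF assms, of j] det2_zero_left by force

lemma CPOS_sides_ordered:
  assumes "CPOS n P" "1 \<le> i" "i < j" "j \<le> n"
  shows "det2 (edge_vec P i) (edge_vec P j) > 0"
  using assms unfolding CPOS_def edge_vec_def by simp

lemma CPOS_consecutive_turns:
  assumes "CPOS n P"
  shows "det2 (edge_vec P j) (edge_vec P (Suc j))
       * det2 (edge_vec P (Suc j)) (edge_vec P (Suc (Suc j))) \<ge> 0"
proof -
  let ?e = "Suc j"
  obtain a where a0: "a \<noteq> 0" and perp: "a \<bullet> edge_vec P ?e = 0"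
    and above: "\<And>k. a \<bullet> (P k - P ?e) \<ge> 0"
    using CPOS_edge_supporting_line[OF assms] by blast
  have "edge_vec P ?e \<noteq> 0"
    by (rule CPOS_edge_nonzero[OF assms])
  moreover have "a \<bullet> (- edge_vec P j) \<ge> 0"
    using above[of j] by (simp add: edge_vec_def)
  moreover have "a \<bullet> edge_vec P (Suc ?e) \<ge> 0"
    using above[of "Suc (Suc ?e)"] perp by (simp add: edge_vec_def inner_diff_right)
  ultimately have "det2 (edge_vec P ?e) (- edge_vec P j) * det2 (edge_vec P ?e) (edge_vec P (Suc ?e)) \<ge> 0"
    using det2_same_halfplane[OF a0 _ perp] by blast
  then show ?thesis
    by (simp add: det2_minus_right det2_swap[of "edge_vec P ?e" "edge_vec P j"])
qed

(* All turns of a CPOS polygon are positive: those between sides 1..n by orientation, and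
   the sign propagates forwards and backwards by local convexity. *)
lemma CPOS_turns_positive:
  assumes "CPOS n P"
  shows "det2 (edge_vec P j) (edge_vec P (Suc j)) > 0"
proof -
  define turn where "turn k = det2 (edge_vec P k) (edge_vec P (Suc k))" for k
  have same_sign: "turn k > 0 \<longleftrightarrow> turn (Suc k) > 0" for k
    using CPOS_consecutive_turns[OF assms, of k]
      CPOS_turn_nonzero[OF assms, of k] CPOS_turn_nonzero[OF assms, of "Suc k"]
    unfolding turn_def zero_le_mult_iff by linarith
  have "n \<ge> 2"
    using assms unfolding CPOS_def by blast
  then have "turn 1 > 0"
    using CPOS_sides_ordered[OF assms, of 1 2] unfolding turn_def by (simp add: numeral_2_eq_2)
  then have "turn 0 > 0"
    using same_sign[of 0] by simp
  then have "turn j > 0"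
    by (induction j) (use same_sign in blast)+
  then show ?thesis
    unfolding turn_def .
qed

(* Opposite sides of a CPOS polygon are antiparallel: v_(j+n) = mu_j v_j with mu_j < 0
   for j >= 1 (indeed for j = 1 by the turn at side n, then inductively). *)
lemma CPOS_opposite_sides:
  assumes "CPOS n P"
  obtains mu where "\<And>j. edge_vec P (j + n) = mu j *\<^sub>R edge_vec P j"
    and "\<And>j. 1 \<le> j \<Longrightarrow> mu j < 0"
proof -
  let ?v = "edge_vec P"
  have n2: "n \<ge> 2"
    using assms unfolding CPOS_def by blast
  have "\<exists>m. ?v (j + n) = m *\<^sub>R ?v j" for j
  proof (rule det2_eq_0_imp_multiple[OF _ CPOS_edge_nonzero[OF assms]])
    have "parallel2 (P (j+n+1) - P (j+n)) (P (j+1) - P j)"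
      using assms unfolding CPOS_def by blast
    then show "det2 (?v j) (?v (j + n)) = 0"
      unfolding parallel2_def edge_vec_def by (simp add: det2_swap[of "P (Suc j) - P j"])
  qed
  then obtain mu where mu: "\<And>j. ?v (j + n) = mu j *\<^sub>R ?v j"
    by metis
  have "mu j < 0" if "1 \<le> j" for j
    using that
  proof (induction j rule: dec_induct)
    case base
    have "0 < det2 (?v n) (?v (Suc n))"
      by (rule CPOS_turns_positive[OF assms])
    also have "\<dots> = - mu 1 * det2 (?v 1) (?v n)"
      using mu[of 1] by (simp add: det2_scaleR_right det2_swap[of "?v n"])
    finally show ?case
      using CPOS_sides_ordered[OF assms, of 1 n] n2 by (simp add: mult_less_0_iff)
  next
    case (step j)
    have "0 < det2 (?v (j + n)) (?v (Suc j + n))"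
      using CPOS_turns_positive[OF assms, of "j + n"] by simp
    also have "\<dots> = mu j * mu (Suc j) * det2 (?v j) (?v (Suc j))"
      using mu[of j] mu[of "Suc j"] by (simp add: det2_scaleR_left det2_scaleR_right)
    finally show ?case
      using step.IH CPOS_turns_positive[OF assms, of j] by (simp add: zero_less_mult_iff)
  qed
  then show ?thesis
    using that mu by blast
qed

(* The great diagonal w_i = v_i + ... + v_(i+n-1) turns clockwise into the side v_i:
   each v_k with i < k < i + n lies strictly to the left of v_i. *)
lemma CPOS_diag_edge_det:
  assumes "CPOS n P" "i \<in> {1..n}"
  shows "det2 (diag_vec n P i) (edge_vec P i) < 0"
proof -
  let ?v = "edge_vec P"
  obtain mu where mu: "\<And>j. ?v (j + n) = mu j *\<^sub>R ?v j" and mu_neg: "\<And>j. 1 \<le> j \<Longrightarrow> mu j < 0"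
    using CPOS_opposite_sides[OF assms(1)] by blast
  have n2: "n \<ge> 2"
    using assms unfolding CPOS_def by blast
  have left: "det2 (?v k) (?v i) < 0" if k: "k \<in> {Suc i..<i+n}" for k
  proof (cases "k \<le> n")
    case True
    then show ?thesis
      using CPOS_sides_ordered[OF assms(1), of i k] assms(2) k det2_swap[of "?v k" "?v i"] by auto
  next
    case False
    then obtain j where j: "k = j + n" "1 \<le> j" "j < i"
      using k by (intro that[of "k - n"]) auto
    then show ?thesis
      using CPOS_sides_ordered[OF assms(1), of j i] assms(2) mu_neg[of j] mu[of j]
      by (simp add: det2_scaleR_left mult_neg_pos)
  qed
  have "diag_vec n P i = (\<Sum>k=i..<i+n. ?v k)"
    unfolding diag_vec_def edge_vec_def by (simp add: sum_Suc_diff')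
  then have "det2 (diag_vec n P i) (?v i) = (\<Sum>k=i..<i+n. det2 (?v k) (?v i))"
    by (simp add: det2_sum_left)
  also have "\<dots> = (\<Sum>k=Suc i..<i+n. det2 (?v k) (?v i))"
    using n2 by (subst sum.atLeast_Suc_lessThan) (auto simp: det2_self)
  also have "\<dots> < 0"
  proof -
    have "0 < (\<Sum>k=Suc i..<i+n. - det2 (?v k) (?v i))"
      using n2 left by (intro sum_pos) auto
    then show ?thesis
      by (simp add: sum_negf)
  qed
  finally show ?thesis .
qed

(* Consecutive great diagonals d_i, d_(i+1), 1 <= i <= n, are never parallel, since
   w_(i+1) = w_i + (mu_i - 1) v_i. *)
lemma CPOS_consecutive_diags:
  assumes "CPOS n P" "i \<in> {1..n}"
  shows "det2 (diag_vec n P i) (diag_vec n P (Suc i)) > 0"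
proof -
  obtain mu where mu: "\<And>j. edge_vec P (j + n) = mu j *\<^sub>R edge_vec P j"
    and mu_neg: "\<And>j. 1 \<le> j \<Longrightarrow> mu j < 0"
    using CPOS_opposite_sides[OF assms(1)] by blast
  have "diag_vec n P (Suc i) = diag_vec n P i + edge_vec P (i + n) - edge_vec P i"
    unfolding diag_vec_def edge_vec_def by simp
  also have "\<dots> = diag_vec n P i + (mu i - 1) *\<^sub>R edge_vec P i"
    using mu[of i] by (simp add: algebra_simps)
  finally have "det2 (diag_vec n P i) (diag_vec n P (Suc i))
      = (mu i - 1) * det2 (diag_vec n P i) (edge_vec P i)"
    by (simp add: det2_add_right det2_scaleR_right det2_self)
  then show ?thesis
    using mu_neg[of i] CPOS_diag_edge_det[OF assms] assms(2) by (simp add: mult_neg_neg)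
qed

lemma great_diag_iff: "x \<in> great_diag n P i \<longleftrightarrow> (\<exists>s. x = P i + s *\<^sub>R diag_vec n P i)"
  unfolding great_diag_def diag_vec_def by (rule in_affine_hull_2_iff)

lemma Mpt_in_great_diag: "Mpt n P i \<in> great_diag n P i"
  unfolding great_diag_iff Mpt_def diag_vec_def
  by (intro exI[of _ "1/2"]) (simp add: vec2_eq_iff field_simps)

lemma CPOS_wrap_vertex:
  assumes "CPOS n P"
  shows "P (Suc n + n) = P 1"
proof -
  have "P (1 + 2*n) = P 1"
    using assms unfolding CPOS_def by blast
  then show ?thesis
    by (simp add: mult_2)
qed

lemma great_diag_wrap:
  assumes "CPOS n P"
  shows "great_diag n P (Suc n) = great_diag n P 1"
  unfolding great_diag_def CPOS_wrap_vertex[OF assms] by (simp add: insert_commute)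

lemma Dpt_iff:
  assumes "CPOS n P" "i \<in> {1..n}"
  shows "x = Dpt n P i \<longleftrightarrow> x \<in> great_diag n P i \<and> x \<in> great_diag n P (Suc i)"
proof -
  have unique: "\<exists>!x. x \<in> great_diag n P i \<and> x \<in> great_diag n P (i + 1)"
    using CPOS_consecutive_diags[OF assms] unfolding great_diag_def diag_vec_def
    by (intro unique_line_intersection) simp
  then have "Dpt n P i \<in> great_diag n P i \<and> Dpt n P i \<in> great_diag n P (i + 1)"
    unfolding Dpt_def by (rule theI')
  with unique show ?thesis
    by auto
qed

lemma all_equal_iff_const: "(\<forall>i\<in>I. \<forall>j\<in>I. f i = f j) \<longleftrightarrow> (\<exists>c. \<forall>i\<in>I. f i = c)"
proof
  assume "\<forall>i\<in>I. \<forall>j\<in>I. f i = f j"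
  then show "\<exists>c. \<forall>i\<in>I. f i = c"
  proof (cases "I = {}")
    case False
    then obtain i0 where "i0 \<in> I"
      by blast
    with \<open>\<forall>i\<in>I. \<forall>j\<in>I. f i = f j\<close> show ?thesis
      by blast
  qed simp
qed auto

lemma Mpt_eq_iff: "Mpt n P i = c \<longleftrightarrow> P (i + n) - c = c - P i"
  unfolding Mpt_def by (auto simp: vec_eq_iff forall_2 field_simps)

(* (ii) -> (i): a common midpoint lies on all of d_1, ..., d_(n+1), so it is every D(i+1/2). *)
lemma Mpt_const_imp_Dpt_const:
  assumes "CPOS n P" and M: "\<forall>i\<in>{1..n}. Mpt n P i = c"
  shows "\<forall>i\<in>{1..n}. Dpt n P i = c"
proof -
  have n2: "n \<ge> 2"
    using assms unfolding CPOS_def by blast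
  have on_diag: "c \<in> great_diag n P i" if "i \<in> {1..Suc n}" for i
  proof (cases "i = Suc n")
    case True
    then show ?thesis
      using Mpt_in_great_diag[of n P 1] M n2 great_diag_wrap[OF assms(1)] by simp
  next
    case False
    then show ?thesis
      using Mpt_in_great_diag[of n P i] M that by simp
  qed
  show ?thesis
    using Dpt_iff[OF assms(1), of _ c] on_diag by simp
qed

(* (i) -> (ii): writing the common point as D = P_i + s_i w_i, the intercept theorem for the
   parallel sides P_i P_(i+1), P_(i+n) P_(i+n+1) gives s_(i+1) = s_i, and the coincidence of
   d_(n+1) with d_1 reversed forces s_1 = 1/2. *)
lemma Dpt_const_imp_Mpt_const:
  assumes "CPOS n P" and D: "\<forall>i\<in>{1..n}. Dpt n P i = d"
  shows "\<forall>i\<in>{1..n}. Mpt n P i = d"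
proof -
  let ?w = "diag_vec n P"
  have n2: "n \<ge> 2"
    using assms unfolding CPOS_def by blast
  have "d \<in> great_diag n P i" if "i \<in> {1..Suc n}" for i
  proof (cases "i = Suc n")
    case True
    then show ?thesis
      using Dpt_iff[OF assms(1), of n d] D n2 by simp
  next
    case False
    then show ?thesis
      using Dpt_iff[OF assms(1), of i d] D that by simp
  qed
  then have "\<forall>i\<in>{1..Suc n}. \<exists>s. d = P i + s *\<^sub>R ?w i"
    unfolding great_diag_iff by blast
  then obtain s where s: "\<forall>i\<in>{1..Suc n}. d = P i + s i *\<^sub>R ?w i"
    by (rule bchoice [THEN exE])
  have step: "s (Suc i) = s i" if i: "i \<in> {1..n}" for i
  proof (rule sym, rule intercept_ratio)
    show "det2 (?w i) (?w (Suc i)) \<noteq> 0"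
      using CPOS_consecutive_diags[OF assms(1) i] by simp
    show "d = P i + s i *\<^sub>R ?w i" "d = P (Suc i) + s (Suc i) *\<^sub>R ?w (Suc i)"
      using s i by auto
    have "parallel2 (P (i+n+1) - P (i+n)) (P (i+1) - P i)"
      using assms(1) unfolding CPOS_def by blast
    then show "det2 ((P (Suc i) + ?w (Suc i)) - (P i + ?w i)) (P (Suc i) - P i) = 0"
      unfolding parallel2_def diag_vec_def by simp
  qed
  have const: "s i = s 1" if "i \<in> {1..Suc n}" for i
  proof -
    have "1 \<le> i" "i \<le> Suc n"
      using that by auto
    then show ?thesis
      by (induction i rule: dec_induct) (use step in auto)
  qed
  have "d = P 1 + s 1 *\<^sub>R ?w 1" "d = P (Suc n) + s 1 *\<^sub>R ?w (Suc n)"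
    using s[rule_format, of 1] s[rule_format, of "Suc n"] n2 const[of "Suc n"] by auto
  then have "P 1 + s 1 *\<^sub>R (P (Suc n) - P 1) = P (Suc n) + s 1 *\<^sub>R (P 1 - P (Suc n))"
    using CPOS_wrap_vertex[OF assms(1)] unfolding diag_vec_def by simp
  then have "(1 - 2 * s 1) *\<^sub>R ?w 1 = 0"
    unfolding diag_vec_def by (simp add: vec2_eq_iff algebra_simps)
  moreover have "?w 1 \<noteq> 0"
    using CPOS_consecutive_diags[OF assms(1), of 1] n2 det2_zero_left by force
  ultimately have half: "s 1 = 1/2"
    by simp
  have "Mpt n P i = d" if "i \<in> {1..n}" for i
  proof -
    have "d = P i + (1/2) *\<^sub>R ?w i"
      using s[rule_format, of i] const[of i] half that by simp
    then show ?thesis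
      unfolding Mpt_def diag_vec_def by (simp add: vec2_eq_iff field_simps)
  qed
  then show ?thesis
    by blast
qed

theorem mainTheorem1:
  fixes n :: nat and P :: "nat \<Rightarrow> real^2"
  assumes "CPOS n P"
  shows "((\<forall>i\<in>{1..n}. \<forall>j\<in>{1..n}. Dpt n P i = Dpt n P j)
            \<longleftrightarrow> (\<forall>i\<in>{1..n}. \<forall>j\<in>{1..n}. Mpt n P i = Mpt n P j))
       \<and> ((\<forall>i\<in>{1..n}. \<forall>j\<in>{1..n}. Mpt n P i = Mpt n P j)
            \<longleftrightarrow> (\<exists>Oc. \<forall>i\<in>{1..n}. P (i+n) - Oc = Oc - P i))"
  unfolding all_equal_iff_const Mpt_eq_iff[symmetric]
  using Dpt_const_imp_Mpt_const[OF assms] Mpt_const_imp_Dpt_const[OF assms] by blast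

end
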